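(* Let $G$ be a graph of order $n$, vertex connectivity $\kappa$ and independence number $\alpha$. If $\kappa+\alpha=n$, then $$\operatorname{th}_{\operatorname{H}}(G)=\lceil 2\sqrt{n-\kappa}+\kappa-1\rceil=\lceil n-\alpha+2\sqrt{\alpha}-1\rceil.$$
   Context: All graphs are finite, simple and undirected. Hopping color change rule: a blue vertex $v$ may force a white vertex $w$ to become blue if $v$ has not previously performed a force and every neighbor of $v$ is blue. For an initial blue set $B$, a chronological list of forces of $B$ is a sequence of such forces applied one at a time until no further force is possible; its underlying unordered set is a set of forces of $B$. $B$ is a hopping forcing set if some chronological list of forces of $B$ turns all vertices blue. For a set of forces $\mathcal F$ of $B$, let $\mathcal F^{(0)}=B$ and for $t\geq1$ let $\mathcal F^{(t)}$ be the set of vertices $w\notin U_{t-1}:=\bigcup_{i=0}^{t-1}\mathcal F^{(i)}$ for which there is $(v\to w)\in\mathcal F$ with $v\in U_{t-1}$ and all neighbors of $v$ in $U_{t-1}$. $\operatorname{pt}_{\operatorname{H}}(G;\mathcal F)$ is the least $t$ with $\bigcup_{i=0}^t\mathcal F^{(i)}=V(G)$ ($\infty$ if none); $\operatorname{pt}_{\operatorname{H}}(G;B)$ is the minimum of $\operatorname{pt}_{\operatorname{H}}(G;\mathcal F)$ over sets of forces $\mathcal F$ of $B$ ($\infty$ if $B$ is not a hopping forcing set). $\operatorname{th}_{\operatorname{H}}(G)=\min_{B\subseteq V(G)}\big(|B|+\operatorname{pt}_{\operatorname{H}}(G;B)\big)$. *)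

theory Defs
  imports Complex_Main "HOL-Library.Extended_Nat"
begin

definition simple_graph :: "'a set \<Rightarrow> ('a \<Rightarrow> 'a \<Rightarrow> bool) \<Rightarrow> bool" where
  "simple_graph V E \<longleftrightarrow> finite V \<and> V \<noteq> {} \<and>
     (\<forall>a b. E a b \<longrightarrow> E b a) \<and> (\<forall>a. \<not> E a a) \<and>
     (\<forall>a b. E a b \<longrightarrow> a \<in> V \<and> b \<in> V)"

definition connected_on :: "('a \<Rightarrow> 'a \<Rightarrow> bool) \<Rightarrow> 'a set \<Rightarrow> bool" where
  "connected_on E X \<longleftrightarrow>
     (\<forall>x\<in>X. \<forall>y\<in>X. (\<lambda>a b. E a b \<and> a \<in> X \<and> b \<in> X)\<^sup>*\<^sup>* x y)"

definition vertex_connectivity :: "'a set \<Rightarrow> ('a \<Rightarrow> 'a \<Rightarrow> bool) \<Rightarrow> nat" where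
  "vertex_connectivity V E =
     Min {card S | S. S \<subseteq> V \<and> (\<not> connected_on E (V - S) \<or> card (V - S) \<le> 1)}"

definition independent_set :: "'a set \<Rightarrow> ('a \<Rightarrow> 'a \<Rightarrow> bool) \<Rightarrow> 'a set \<Rightarrow> bool" where
  "independent_set V E I \<longleftrightarrow> I \<subseteq> V \<and> (\<forall>a\<in>I. \<forall>b\<in>I. \<not> E a b)"

definition independence_number :: "'a set \<Rightarrow> ('a \<Rightarrow> 'a \<Rightarrow> bool) \<Rightarrow> nat" where
  "independence_number V E = Max {card I | I. independent_set V E I}"

text \<open>Hopping color change rule: with blue set S and set of vertices that have
already forced, v may force w.\<close>
definition hop_can_force ::
  "'a set \<Rightarrow> ('a \<Rightarrow> 'a \<Rightarrow> bool) \<Rightarrow> 'a set \<Rightarrow> 'a set \<Rightarrow> 'a \<Rightarrow> 'a \<Rightarrow> bool" where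
  "hop_can_force V E S used v w \<longleftrightarrow>
     v \<in> S \<and> v \<notin> used \<and> (\<forall>u. E v u \<longrightarrow> u \<in> S) \<and> w \<in> V \<and> w \<notin> S"

fun hop_chron ::
  "'a set \<Rightarrow> ('a \<Rightarrow> 'a \<Rightarrow> bool) \<Rightarrow> 'a set \<Rightarrow> 'a set \<Rightarrow> ('a \<times> 'a) list \<Rightarrow> bool" where
  "hop_chron V E S used [] \<longleftrightarrow> \<not> (\<exists>v w. hop_can_force V E S used v w)"
| "hop_chron V E S used ((v, w) # fs) \<longleftrightarrow>
     hop_can_force V E S used v w \<and> hop_chron V E (insert w S) (insert v used) fs"

definition chron_list_of_forces ::
  "'a set \<Rightarrow> ('a \<Rightarrow> 'a \<Rightarrow> bool) \<Rightarrow> 'a set \<Rightarrow> ('a \<times> 'a) list \<Rightarrow> bool" where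
  "chron_list_of_forces V E B fs \<longleftrightarrow> hop_chron V E B {} fs"

definition set_of_forces ::
  "'a set \<Rightarrow> ('a \<Rightarrow> 'a \<Rightarrow> bool) \<Rightarrow> 'a set \<Rightarrow> ('a \<times> 'a) set \<Rightarrow> bool" where
  "set_of_forces V E B F \<longleftrightarrow> (\<exists>fs. chron_list_of_forces V E B fs \<and> F = set fs)"

definition hopping_forcing_set :: "'a set \<Rightarrow> ('a \<Rightarrow> 'a \<Rightarrow> bool) \<Rightarrow> 'a set \<Rightarrow> bool" where
  "hopping_forcing_set V E B \<longleftrightarrow> B \<subseteq> V \<and>
     (\<exists>fs. chron_list_of_forces V E B fs \<and> B \<union> snd ` set fs = V)"

text \<open>Cumulative blue set after t rounds: U_t = F^(0) \<union> ... \<union> F^(t).\<close>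
fun hop_rounds ::
  "('a \<Rightarrow> 'a \<Rightarrow> bool) \<Rightarrow> 'a set \<Rightarrow> ('a \<times> 'a) set \<Rightarrow> nat \<Rightarrow> 'a set" where
  "hop_rounds E B F 0 = B"
| "hop_rounds E B F (Suc t) = hop_rounds E B F t \<union>
     {w. w \<notin> hop_rounds E B F t \<and>
         (\<exists>v. (v, w) \<in> F \<and> v \<in> hop_rounds E B F t \<and>
               (\<forall>u. E v u \<longrightarrow> u \<in> hop_rounds E B F t))}"

definition pt_H_forces ::
  "'a set \<Rightarrow> ('a \<Rightarrow> 'a \<Rightarrow> bool) \<Rightarrow> 'a set \<Rightarrow> ('a \<times> 'a) set \<Rightarrow> enat" where
  "pt_H_forces V E B F =
     (if \<exists>t. hop_rounds E B F t = V then enat (LEAST t. hop_rounds E B F t = V) else \<infinity>)"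

definition pt_H :: "'a set \<Rightarrow> ('a \<Rightarrow> 'a \<Rightarrow> bool) \<Rightarrow> 'a set \<Rightarrow> enat" where
  "pt_H V E B =
     (if hopping_forcing_set V E B
      then (INF F \<in> {F. set_of_forces V E B F}. pt_H_forces V E B F) else \<infinity>)"

definition th_H :: "'a set \<Rightarrow> ('a \<Rightarrow> 'a \<Rightarrow> bool) \<Rightarrow> enat" where
  "th_H V E = (INF B \<in> Pow V. enat (card B) + pt_H V E B)"

end

theory Submission
  imports Defs "HOL-Library.Discrete_Functions"
begin

text \<open>
  Lower bound, valid in every graph: fix a blue set \<open>B\<close> and a set of forces. The vertices
  forced in one round have pairwise distinct forcers \<open>Y\<close>, all of whose neighbours were
  already blue. While some vertex is still white, deleting the other blue vertices separates
  \<open>Y\<close> from it, so one round adds at most \<open>|B| - \<kappa>\<close> vertices. Hence a complete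
  forcing in \<open>t\<close> rounds gives \<open>n \<le> |B| + t (|B| - \<kappa>)\<close>, and AM-GM turns this into
  \<open>|B| + t \<ge> 2 \<surd>(n - \<kappa>) + \<kappa> - 1\<close>.

  Upper bound, also valid in every graph: list a maximum independent set \<open>I\<close> as
  \<open>x\<^sub>0, \<dots>, x\<^bsub>\<alpha>-1\<^esub>\<close> and choose \<open>b, q\<close> with \<open>\<alpha> \<le> b q\<close> and \<open>b + q \<le> \<lceil>2 \<surd>\<alpha>\<rceil>\<close>.
  Start with \<open>V - I\<close> and \<open>x\<^sub>0, \<dots>, x\<^bsub>b-1\<^esub>\<close> blue and let \<open>x\<^sub>i\<close> force
  \<open>x\<^bsub>i+b\<^esub>\<close>: every \<open>x\<^sub>i\<close> has its neighbours in \<open>V - I\<close>, so each round colours the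
  next \<open>b\<close> vertices of the list and \<open>q - 1\<close> rounds suffice.

  When \<open>\<kappa> + \<alpha> = n\<close> the two bounds coincide.
\<close>

section \<open>Rounds of hopping forcing\<close>

lemma hop_chron_forceD:
  "hop_chron V E S used fs \<Longrightarrow> (v, w) \<in> set fs \<Longrightarrow> v \<notin> used \<and> w \<in> V \<and> w \<notin> S"
  by (induction V E S used fs rule: hop_chron.induct) (auto simp: hop_can_force_def)

lemma hop_chron_single_valued: "hop_chron V E S used fs \<Longrightarrow> single_valued (set fs)"
proof (induction V E S used fs rule: hop_chron.induct)
  case (2 V E S used v w fs)
  then show ?case
    using hop_chron_forceD[of V E "insert w S" "insert v used" fs]
    by (auto simp: single_valued_def)
qed (simp add: single_valued_def)

lemma set_of_forces_target:
  "set_of_forces V E B F \<Longrightarrow> (v, w) \<in> F \<Longrightarrow> w \<in> V \<and> w \<notin> B"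
  unfolding set_of_forces_def chron_list_of_forces_def by (auto dest: hop_chron_forceD)

lemma set_of_forces_single_valued: "set_of_forces V E B F \<Longrightarrow> single_valued F"
  unfolding set_of_forces_def chron_list_of_forces_def by (auto dest: hop_chron_single_valued)

lemma hop_rounds_base: "B \<subseteq> hop_rounds E B F t"
  by (induction t) auto

lemma hop_rounds_subset: "B \<subseteq> V \<Longrightarrow> Range F \<subseteq> V \<Longrightarrow> hop_rounds E B F t \<subseteq> V"
  by (induction t) auto

lemma hop_rounds_Suc_forcer:
  assumes "w \<in> hop_rounds E B F (Suc s)" "w \<notin> B"
  shows "\<exists>v. (v, w) \<in> F \<and> v \<in> hop_rounds E B F s \<and> (\<forall>u. E v u \<longrightarrow> u \<in> hop_rounds E B F s)"
  using assms
proof (induction s)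
  case (Suc s)
  show ?case
  proof (cases "w \<in> hop_rounds E B F (Suc s)")
    case True
    have "hop_rounds E B F s \<subseteq> hop_rounds E B F (Suc s)" by auto
    with Suc.IH[OF True Suc.prems(2)] show ?thesis by blast
  next
    case False
    with Suc.prems show ?thesis by auto
  qed
qed auto

lemma hop_rounds_Suc_forcers:
  assumes "set_of_forces V E B F"
  obtains f where "inj_on f (hop_rounds E B F (Suc s) - B)"
    and "\<And>w. w \<in> hop_rounds E B F (Suc s) - B \<Longrightarrow> f w \<in> hop_rounds E B F s"
    and "\<And>w u. w \<in> hop_rounds E B F (Suc s) - B \<Longrightarrow> E (f w) u \<Longrightarrow> u \<in> hop_rounds E B F s"
proof -
  have "\<forall>w\<in>hop_rounds E B F (Suc s) - B. \<exists>v. (v, w) \<in> F \<and> v \<in> hop_rounds E B F s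
          \<and> (\<forall>u. E v u \<longrightarrow> u \<in> hop_rounds E B F s)"
  proof
    fix w assume "w \<in> hop_rounds E B F (Suc s) - B"
    then show "\<exists>v. (v, w) \<in> F \<and> v \<in> hop_rounds E B F s \<and> (\<forall>u. E v u \<longrightarrow> u \<in> hop_rounds E B F s)"
      using hop_rounds_Suc_forcer[of w E B F s] by blast
  qed
  from bchoice[OF this] obtain f where f: "\<forall>w\<in>hop_rounds E B F (Suc s) - B.
      (f w, w) \<in> F \<and> f w \<in> hop_rounds E B F s \<and> (\<forall>u. E (f w) u \<longrightarrow> u \<in> hop_rounds E B F s)"
    by blast
  have "inj_on f (hop_rounds E B F (Suc s) - B)"
    by (rule inj_onI) (metis f single_valuedD[OF set_of_forces_single_valued[OF assms]])
  with f show thesis using that by blast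
qed

section \<open>The lower bound\<close>

lemma vertex_connectivity_le:
  assumes "finite V" "S \<subseteq> V" "\<not> connected_on E (V - S) \<or> card (V - S) \<le> 1"
  shows "vertex_connectivity V E \<le> card S"
proof -
  have "finite {card S | S. S \<subseteq> V \<and> (\<not> connected_on E (V - S) \<or> card (V - S) \<le> 1)}"
    using assms(1) by (auto intro: finite_subset[of _ "card ` Pow V"])
  then show ?thesis
    unfolding vertex_connectivity_def using assms by (intro Min_le) auto
qed

lemma vertex_connectivity_le_card_Diff:
  assumes "finite V" "U \<subseteq> V" "U \<noteq> V" "Y \<subseteq> U" "Y \<noteq> {}"
    and closed: "\<And>y u. y \<in> Y \<Longrightarrow> E y u \<Longrightarrow> u \<in> U"
  shows "vertex_connectivity V E \<le> card U - card Y"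
proof -
  obtain x where x: "x \<in> V" "x \<notin> U" using assms(2,3) by blast
  obtain y where y: "y \<in> Y" using assms(5) by blast
  let ?R = "\<lambda>a b. E a b \<and> a \<in> V - (U - Y) \<and> b \<in> V - (U - Y)"
  have "z \<in> Y" if "?R\<^sup>*\<^sup>* y z" for z
    using that by (induction rule: rtranclp_induct) (use y closed in blast)+
  then have "\<not> ?R\<^sup>*\<^sup>* y x" using x assms(4) by blast
  then have "\<not> connected_on E (V - (U - Y))"
    unfolding connected_on_def using x y assms(2,4) by blast
  then have "vertex_connectivity V E \<le> card (U - Y)"
    using assms(1,2) by (intro vertex_connectivity_le) auto
  then show ?thesis
    using assms(1,2,4) by (simp add: card_Diff_subset finite_subset)
qed

lemma hop_rounds_card_Suc_le:
  assumes fin: "finite V" and "B \<subseteq> V" and forces: "set_of_forces V E B F"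
    and unfinished: "hop_rounds E B F s \<noteq> V"
  shows "card (hop_rounds E B F (Suc s))
           \<le> card (hop_rounds E B F s) + (card B - vertex_connectivity V E)"
proof -
  define U where "U = hop_rounds E B F s"
  define U' where "U' = hop_rounds E B F (Suc s)"
  have "Range F \<subseteq> V" using set_of_forces_target[OF forces] by blast
  then have UV: "U \<subseteq> V" "U' \<subseteq> V"
    unfolding U_def U'_def using hop_rounds_subset[OF \<open>B \<subseteq> V\<close>] by blast+
  have finU: "finite U" "finite U'" using UV fin finite_subset by blast+
  have B_U: "B \<subseteq> U" and B_U': "B \<subseteq> U'" unfolding U_def U'_def by (rule hop_rounds_base)+
  obtain f where inj: "inj_on f (U' - B)" and forcer_blue: "\<And>w. w \<in> U' - B \<Longrightarrow> f w \<in> U"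
    and closed: "\<And>w u. w \<in> U' - B \<Longrightarrow> E (f w) u \<Longrightarrow> u \<in> U"
    unfolding U_def U'_def by (rule hop_rounds_Suc_forcers[OF forces, of s]) blast
  have forcers_U: "f ` (U' - B) \<subseteq> U" using forcer_blue by blast
  have card_forcers: "card (f ` (U' - B)) = card U' - card B"
    using inj B_U' finU by (simp add: card_image card_Diff_subset finite_subset)
  show ?thesis
  proof (cases "U' - B = {}")
    case True
    then have "card U' \<le> card U" using B_U finU by (intro card_mono) auto
    then show ?thesis unfolding U_def U'_def by linarith
  next
    case False
    have "vertex_connectivity V E \<le> card U - card (f ` (U' - B))"
    proof (rule vertex_connectivity_le_card_Diff[OF fin UV(1)])
      show "U \<noteq> V" using unfinished unfolding U_def .
      show "f ` (U' - B) \<noteq> {}" using False by blast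
      show "\<And>y u. y \<in> f ` (U' - B) \<Longrightarrow> E y u \<Longrightarrow> u \<in> U" using closed by blast
    qed (rule forcers_U)
    moreover have "card (f ` (U' - B)) \<le> card U" using card_mono[OF finU(1) forcers_U] .
    moreover have "card B \<le> card U'" using card_mono[OF finU(2) B_U'] .
    ultimately show ?thesis using card_forcers unfolding U_def U'_def by linarith
  qed
qed

lemma hop_rounds_card_le:
  assumes "finite V" "B \<subseteq> V" "set_of_forces V E B F" "\<forall>s<t. hop_rounds E B F s \<noteq> V"
  shows "card (hop_rounds E B F t) \<le> card B + t * (card B - vertex_connectivity V E)"
  using assms(4)
proof (induction t)
  case (Suc t)
  then show ?case using hop_rounds_card_Suc_le[OF assms(1-3), of t] by simp
qed simp

lemma two_sqrt_diff_le:
  fixes n k b T :: nat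
  assumes "k \<le> n" "b \<le> n" "n \<le> b + T * (b - k)"
  shows "2 * sqrt (real n - real k) + real k - 1 \<le> real (b + T)"
proof (cases "b \<le> k")
  case True
  then have "b = k" "n = k" using assms by auto
  then show ?thesis by simp
next
  case False
  have "(b - k) * (T + 1) = (b - k) + T * (b - k)" by simp
  then have "n - k \<le> (b - k) * (T + 1)" using assms(3) False by linarith
  then have "real (n - k) \<le> real ((b - k) * (T + 1))" by (simp only: of_nat_le_iff)
  then have "real n - real k \<le> real (b - k) * (real T + 1)"
    using assms(1) by (simp only: of_nat_diff of_nat_mult of_nat_add of_nat_1)
  then have "2 * sqrt (real n - real k) \<le> 2 * sqrt (real (b - k) * (real T + 1))"
    by simp
  also have "\<dots> \<le> real (b - k) + (real T + 1)"
    using arith_geo_mean_sqrt[of "real (b - k)" "real T + 1"] by simp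
  finally show ?thesis using False by simp
qed

lemma enat_le_add_INF:
  assumes "\<And>x. x \<in> X \<Longrightarrow> enat c \<le> enat b + g x"
  shows "enat c \<le> enat b + (INF x\<in>X. g x)"
proof -
  have "enat (c - b) \<le> g x" if "x \<in> X" for x
    using assms[OF that] by (cases "g x") auto
  then have "enat b + enat (c - b) \<le> enat b + (INF x\<in>X. g x)"
    by (intro add_left_mono INF_greatest)
  then show ?thesis by (rule order_trans[rotated]) simp
qed

lemma card_add_pt_H_forces_ge:
  assumes fin: "finite V" and "B \<subseteq> V" "set_of_forces V E B F"
  shows "enat (nat \<lceil>2 * sqrt (real (card V) - real (vertex_connectivity V E))
                       + real (vertex_connectivity V E) - 1\<rceil>)
           \<le> enat (card B) + pt_H_forces V E B F"
proof (cases "\<exists>t. hop_rounds E B F t = V")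
  case True
  define T where "T = (LEAST t. hop_rounds E B F t = V)"
  have "hop_rounds E B F T = V" unfolding T_def using True by (rule LeastI_ex)
  moreover have "\<forall>s<T. hop_rounds E B F s \<noteq> V" unfolding T_def using not_less_Least by blast
  ultimately have "card V \<le> card B + T * (card B - vertex_connectivity V E)"
    using hop_rounds_card_le[OF assms] by metis
  moreover have "vertex_connectivity V E \<le> card V" using vertex_connectivity_le[OF fin, of V] by simp
  moreover have "card B \<le> card V" using card_mono[OF fin \<open>B \<subseteq> V\<close>] .
  ultimately have "2 * sqrt (real (card V) - real (vertex_connectivity V E))
                     + real (vertex_connectivity V E) - 1 \<le> real (card B + T)"
    by (intro two_sqrt_diff_le)
  then have "nat \<lceil>2 * sqrt (real (card V) - real (vertex_connectivity V E))
                       + real (vertex_connectivity V E) - 1\<rceil> \<le> card B + T"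
    by (simp only: nat_ceiling_le_eq)
  then show ?thesis using True by (simp add: pt_H_forces_def T_def)
qed (simp add: pt_H_forces_def)

theorem th_H_ge:
  assumes "finite V"
  shows "enat (nat \<lceil>2 * sqrt (real (card V) - real (vertex_connectivity V E))
                       + real (vertex_connectivity V E) - 1\<rceil>) \<le> th_H V E"
  unfolding th_H_def
proof (rule INF_greatest)
  fix B assume "B \<in> Pow V"
  then show "enat (nat \<lceil>2 * sqrt (real (card V) - real (vertex_connectivity V E))
                       + real (vertex_connectivity V E) - 1\<rceil>) \<le> enat (card B) + pt_H V E B"
    unfolding pt_H_def using card_add_pt_H_forces_ge[OF assms]
    by (auto intro: enat_le_add_INF)
qed

section \<open>The upper bound\<close>

lemma nth_in_set_take_iff:
  assumes "distinct xs" "i < length xs"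
  shows "xs ! i \<in> set (take m xs) \<longleftrightarrow> i < m"
proof
  assume "xs ! i \<in> set (take m xs)"
  then obtain j where "j < m" "j < length xs" "xs ! j = xs ! i"
    by (auto simp: in_set_conv_nth)
  then show "i < m" using assms nth_eq_iff_index_eq by metis
next
  assume "i < m"
  then show "xs ! i \<in> set (take m xs)"
    using assms(2) by (metis in_set_conv_nth length_take min_less_iff_conj nth_take)
qed

locale shifted_forcing =
  fixes V :: "'a set" and E :: "'a \<Rightarrow> 'a \<Rightarrow> bool" and xs :: "'a list" and b :: nat
  assumes graph: "simple_graph V E"
    and distinct_xs: "distinct xs"
    and independent: "independent_set V E (set xs)"
    and b_pos: "0 < b"
    and b_le_length: "b \<le> length xs"
begin

definition blue :: "nat \<Rightarrow> 'a set" where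
  "blue m = (V - set xs) \<union> set (take m xs)"

definition shift_forces :: "nat \<Rightarrow> ('a \<times> 'a) list" where
  "shift_forces j = map (\<lambda>i. (xs ! i, xs ! (i + b))) [j..<length xs - b]"

lemma set_xs_subset: "set xs \<subseteq> V"
  using independent unfolding independent_set_def by blast

lemma neighbour_outside: "x \<in> set xs \<Longrightarrow> E x u \<Longrightarrow> u \<in> V - set xs"
  using graph independent unfolding simple_graph_def independent_set_def by blast

lemma blue_subset: "blue m \<subseteq> V"
  using set_xs_subset by (auto simp: blue_def dest: in_set_takeD)

lemma blue_length: "blue (length xs) = V"
  using set_xs_subset by (auto simp: blue_def)

lemma nth_in_blue_iff: "i < length xs \<Longrightarrow> xs ! i \<in> blue m \<longleftrightarrow> i < m"
  using nth_in_set_take_iff[OF distinct_xs] by (simp add: blue_def)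

lemma hop_chron_shift_forces:
  "j \<le> length xs - b \<Longrightarrow> hop_chron V E (blue (b + j)) (set (take j xs)) (shift_forces j)"
proof (induction j rule: inc_induct)
  case base
  then show ?case using b_le_length blue_length by (simp add: shift_forces_def hop_can_force_def)
next
  case (step j)
  have j: "j < length xs" "j + b < length xs" using step.hyps by auto
  have "hop_can_force V E (blue (b + j)) (set (take j xs)) (xs ! j) (xs ! (j + b))"
    unfolding hop_can_force_def
    using j b_pos nth_in_blue_iff nth_in_set_take_iff[OF distinct_xs] set_xs_subset
      neighbour_outside[OF nth_mem[OF j(1)]]
    by (auto simp: blue_def)
  moreover have "blue (b + Suc j) = insert (xs ! (j + b)) (blue (b + j))"
    using j by (simp add: blue_def take_Suc_conv_app_nth add.commute)
  moreover have "set (take (Suc j) xs) = insert (xs ! j) (set (take j xs))"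
    using j by (simp add: take_Suc_conv_app_nth)
  moreover have "shift_forces j = (xs ! j, xs ! (j + b)) # shift_forces (Suc j)"
    using step.hyps by (simp add: shift_forces_def upt_conv_Cons)
  ultimately show ?case using step.IH by simp
qed

lemma set_of_forces_shift_forces: "set_of_forces V E (blue b) (set (shift_forces 0))"
  using hop_chron_shift_forces[of 0] by (auto simp: set_of_forces_def chron_list_of_forces_def)

lemma hopping_forcing_set_blue: "hopping_forcing_set V E (blue b)"
proof -
  have "map snd (shift_forces 0) = drop b xs"
    by (rule nth_equalityI) (auto simp: shift_forces_def add.commute)
  moreover have "set (take b xs) \<union> set (drop b xs) = set xs"
    by (metis append_take_drop_id set_append)
  ultimately have "blue b \<union> snd ` set (shift_forces 0) = V"
    using set_xs_subset by (auto simp: blue_def simp flip: set_map)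
  then show ?thesis
    using hop_chron_shift_forces[of 0] blue_subset
    by (auto simp: hopping_forcing_set_def chron_list_of_forces_def)
qed

lemma blue_subset_hop_rounds:
  "blue (min (length xs) (b * Suc t)) \<subseteq> hop_rounds E (blue b) (set (shift_forces 0)) t"
proof (induction t)
  case 0
  then show ?case using b_le_length by simp
next
  case (Suc t)
  let ?U = "hop_rounds E (blue b) (set (shift_forces 0)) t"
  show ?case
  proof
    fix v assume v: "v \<in> blue (min (length xs) (b * Suc (Suc t)))"
    show "v \<in> hop_rounds E (blue b) (set (shift_forces 0)) (Suc t)"
    proof (cases "v \<in> blue (min (length xs) (b * Suc t))")
      case True
      then show ?thesis using Suc.IH by auto
    next
      case False
      with v obtain i where i: "i < length xs" "v = xs ! i"
        by (auto simp: blue_def in_set_conv_nth dest: in_set_takeD)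
      with v False have "b * Suc t \<le> i" "i < b * Suc (Suc t)"
        by (auto simp: nth_in_blue_iff)
      then have j: "i = (i - b) + b" "i - b < b * Suc t" "i - b < length xs - b"
        using i(1) b_pos by (auto simp: algebra_simps)
      have forcer_blue: "xs ! (i - b) \<in> ?U"
        using Suc.IH j i(1) by (auto simp: nth_in_blue_iff)
      have "V - set xs \<subseteq> ?U"
        using hop_rounds_base[of "blue b" E "set (shift_forces 0)" t] by (auto simp: blue_def)
      then have forcer_closed: "\<forall>u. E (xs ! (i - b)) u \<longrightarrow> u \<in> ?U"
        using neighbour_outside[of "xs ! (i - b)"] i(1) by auto
      have "(xs ! (i - b), v) \<in> set (shift_forces 0)"
        using j i by (force simp: shift_forces_def)
      then show ?thesis using forcer_blue forcer_closed by auto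
    qed
  qed
qed

lemma pt_H_blue_le:
  assumes "length xs \<le> b * q"
  shows "pt_H V E (blue b) \<le> enat (q - 1)"
proof -
  let ?F = "set (shift_forces 0)"
  have "q \<noteq> 0" using assms b_pos b_le_length by (cases q) auto
  then have "blue (min (length xs) (b * Suc (q - 1))) = V" using assms blue_length by simp
  moreover have "Range ?F \<subseteq> V"
    using set_of_forces_target[OF set_of_forces_shift_forces] by blast
  ultimately have "hop_rounds E (blue b) ?F (q - 1) = V"
    using blue_subset_hop_rounds[of "q - 1"] hop_rounds_subset[OF blue_subset] by blast
  then have "pt_H_forces V E (blue b) ?F \<le> enat (q - 1)"
    unfolding pt_H_forces_def by (auto intro: Least_le)
  moreover have "pt_H V E (blue b) \<le> pt_H_forces V E (blue b) ?F"
    unfolding pt_H_def using hopping_forcing_set_blue set_of_forces_shift_forces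
    by (auto intro: INF_lower)
  ultimately show ?thesis by simp
qed

lemma card_blue: "card (blue b) = card V - length xs + b"
proof -
  have "finite V" using graph unfolding simple_graph_def by blast
  then have "card (V - set xs) = card V - length xs"
    using set_xs_subset distinct_xs by (simp add: card_Diff_subset distinct_card)
  moreover have "card (set (take b xs)) = b"
    using b_le_length distinct_xs by (simp add: distinct_card)
  moreover have "(V - set xs) \<inter> set (take b xs) = {}"
    by (auto dest: in_set_takeD)
  ultimately show ?thesis
    using \<open>finite V\<close> by (simp add: blue_def card_Un_disjoint)
qed

end

lemma th_H_le_independent_set:
  assumes "simple_graph V E" "independent_set V E I" "0 < b" "b \<le> card I" "card I \<le> b * q"
  shows "th_H V E \<le> enat (card V - card I + b + (q - 1))"
proof -
  have "finite I"
    using assms(1,2) unfolding simple_graph_def independent_set_def by (auto intro: finite_subset)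
  then obtain xs where xs: "set xs = I" "distinct xs" using finite_distinct_list by blast
  then have length_xs: "length xs = card I" using distinct_card by metis
  interpret shifted_forcing V E xs b
    using assms xs length_xs by unfold_locales auto
  have "th_H V E \<le> enat (card (blue b)) + pt_H V E (blue b)"
    unfolding th_H_def using blue_subset by (auto intro: INF_lower)
  also have "\<dots> \<le> enat (card (blue b)) + enat (q - 1)"
    using pt_H_blue_le assms(5) length_xs by (intro add_left_mono) simp
  finally show ?thesis using card_blue length_xs by simp
qed

lemma independence_number_attained:
  assumes "finite V"
  shows "\<exists>I. independent_set V E I \<and> card I = independence_number V E"
proof -
  have "finite {card I | I. independent_set V E I}"
    using assms unfolding independent_set_def by (auto intro: finite_subset[of _ "card ` Pow V"])
  moreover have "independent_set V E {}" by (simp add: independent_set_def)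
  ultimately have "independence_number V E \<in> {card I | I. independent_set V E I}"
    unfolding independence_number_def by (intro Max_in) auto
  then show ?thesis by auto
qed

lemma independence_number_pos:
  assumes "simple_graph V E"
  shows "0 < independence_number V E"
proof -
  obtain x where "x \<in> V" using assms unfolding simple_graph_def by blast
  then have "card {x} \<in> {card I | I. independent_set V E I}"
    using assms unfolding simple_graph_def independent_set_def by blast
  moreover have "finite {card I | I. independent_set V E I}"
    using assms unfolding simple_graph_def independent_set_def
    by (auto intro: finite_subset[of _ "card ` Pow V"])
  ultimately have "card {x} \<le> independence_number V E"
    unfolding independence_number_def by (rule Max_ge[rotated])
  then show ?thesis by simp
qed

lemma le_nat_ceiling_two_sqrtI:
  fixes m a :: nat
  assumes "(m - 1)\<^sup>2 < 4 * a"
  shows "m \<le> nat \<lceil>2 * sqrt (real a)\<rceil>"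
proof (cases "m = 0")
  case False
  have "real ((m - 1)\<^sup>2) < real (4 * a)" using assms by (simp only: of_nat_less_iff)
  then have "real (m - 1) < sqrt (4 * real a)" by (intro real_less_rsqrt) simp
  then have "real m - 1 < 2 * sqrt (real a)" using False by (simp add: real_sqrt_mult of_nat_diff)
  then show ?thesis by (simp add: le_nat_iff le_ceiling_iff)
qed simp

lemma exists_factor_pair_le_ceiling_two_sqrt:
  fixes a :: nat
  assumes "0 < a"
  shows "\<exists>b q. 0 < b \<and> b \<le> a \<and> a \<le> b * q \<and> b + q \<le> nat \<lceil>2 * sqrt (real a)\<rceil>"
proof -
  define s where "s = floor_sqrt a"
  have s: "0 < s" "s * s \<le> a" "a < Suc s * Suc s"
    using assms Suc_floor_sqrt_power2_gt[of a] floor_sqrt_power2_le[of a]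
    by (simp_all add: s_def power2_eq_square)
  have "s \<le> s * s" by (rule le_square)
  consider "a = s * s" | "s * s < a" "a \<le> s * Suc s" | "s * Suc s < a"
    using s by linarith
  then show ?thesis
  proof cases
    case 1
    have "s + s \<le> nat \<lceil>2 * sqrt (real a)\<rceil>"
      using 1 s(1) by (intro le_nat_ceiling_two_sqrtI)
        (cases s, simp_all add: power2_eq_square algebra_simps)
    then show ?thesis using 1 s(1) \<open>s \<le> s * s\<close> by blast
  next
    case 2
    have "s + Suc s \<le> nat \<lceil>2 * sqrt (real a)\<rceil>"
      using 2 by (intro le_nat_ceiling_two_sqrtI) (simp add: power2_eq_square algebra_simps)
    moreover have "s \<le> a" using 2 \<open>s \<le> s * s\<close> by linarith
    ultimately show ?thesis using 2 s(1) by blast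
  next
    case 3
    have "Suc s + Suc s \<le> nat \<lceil>2 * sqrt (real a)\<rceil>"
      using 3 by (intro le_nat_ceiling_two_sqrtI) (simp add: power2_eq_square algebra_simps)
    moreover have "s \<le> s * Suc s" by simp
    with 3 have "Suc s \<le> a" by linarith
    moreover have "a \<le> Suc s * Suc s" using s(3) by (rule less_imp_le)
    ultimately show ?thesis using zero_less_Suc[of s] by blast
  qed
qed

theorem th_H_le:
  assumes "simple_graph V E"
  shows "th_H V E \<le> enat (card V - independence_number V E
                            + nat \<lceil>2 * sqrt (real (independence_number V E))\<rceil> - 1)"
proof -
  have "finite V" using assms unfolding simple_graph_def by blast
  then obtain I where I: "independent_set V E I" "card I = independence_number V E"
    using independence_number_attained by blast
  define c where "c = nat \<lceil>2 * sqrt (real (card I))\<rceil>"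
  have "0 < card I" using independence_number_pos[OF assms] I(2) by simp
  then obtain b q where bq: "0 < b" "b \<le> card I" "card I \<le> b * q" "b + q \<le> c"
    unfolding c_def using exists_factor_pair_le_ceiling_two_sqrt by blast
  have "0 < q" using bq(3) \<open>0 < card I\<close> by (cases q) auto
  then have "card V - card I + b + (q - 1) \<le> card V - card I + c - 1" using bq(4) by linarith
  then have "enat (card V - card I + b + (q - 1)) \<le> enat (card V - card I + c - 1)" by simp
  with th_H_le_independent_set[OF assms I(1) bq(1-3)] show ?thesis
    unfolding c_def I(2) by (rule order_trans)
qed

lemma nat_ceiling_add_two_sqrt:
  "nat \<lceil>real m + 2 * sqrt (real a) - 1\<rceil> = m + nat \<lceil>2 * sqrt (real a)\<rceil> - 1"
proof -
  have "real m + 2 * sqrt (real a) - 1 = 2 * sqrt (real a) + of_int (int m - 1)" by simp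
  then have "\<lceil>real m + 2 * sqrt (real a) - 1\<rceil> = \<lceil>2 * sqrt (real a)\<rceil> + (int m - 1)"
    by (simp only: ceiling_add_of_int)
  moreover have "0 \<le> \<lceil>2 * sqrt (real a)\<rceil>"
    unfolding zero_le_ceiling using real_sqrt_ge_zero[of "real a"] by linarith
  ultimately show ?thesis by linarith
qed

theorem lemma3p11:
  fixes V :: "'a set" and E :: "'a \<Rightarrow> 'a \<Rightarrow> bool"
  assumes "simple_graph V E"
    and "vertex_connectivity V E + independence_number V E = card V"
  shows "th_H V E =
           enat (nat \<lceil>2 * sqrt (real (card V) - real (vertex_connectivity V E))
                       + real (vertex_connectivity V E) - 1\<rceil>)
       \<and> th_H V E =
           enat (nat \<lceil>real (card V) - real (independence_number V E)
                       + 2 * sqrt (real (independence_number V E)) - 1\<rceil>)"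
proof -
  define n \<kappa> \<alpha> where "n = card V" and "\<kappa> = vertex_connectivity V E"
    and "\<alpha> = independence_number V E"
  have "n = \<kappa> + \<alpha>" using assms(2) unfolding n_def \<kappa>_def \<alpha>_def by simp
  then have bounds_agree:
    "2 * sqrt (real n - real \<kappa>) + real \<kappa> - 1 = real (n - \<alpha>) + 2 * sqrt (real \<alpha>) - 1"
    "real n - real \<alpha> + 2 * sqrt (real \<alpha>) - 1 = real (n - \<alpha>) + 2 * sqrt (real \<alpha>) - 1"
    by simp_all
  have "th_H V E \<le> enat (n - \<alpha> + nat \<lceil>2 * sqrt (real \<alpha>)\<rceil> - 1)"
    using th_H_le[OF assms(1)] unfolding n_def \<alpha>_def .
  moreover have "enat (nat \<lceil>2 * sqrt (real n - real \<kappa>) + real \<kappa> - 1\<rceil>) \<le> th_H V E"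
    using th_H_ge[of V E] assms(1) unfolding n_def \<kappa>_def simple_graph_def by blast
  ultimately have "th_H V E = enat (nat \<lceil>real (n - \<alpha>) + 2 * sqrt (real \<alpha>) - 1\<rceil>)"
    unfolding bounds_agree nat_ceiling_add_two_sqrt by (rule antisym)
  then show ?thesis
    unfolding n_def[symmetric] \<kappa>_def[symmetric] \<alpha>_def[symmetric] bounds_agree by simp
qed

end
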